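(* Consider a one-site PTM cascade with $n\ge1$ layers and positive total amounts. Let $r(s)=f_0(s)+f_1^Y(s)\in\mathbb{R}(s)$ and write $r=r_1/r_2$ in reduced form with $r_1,r_2\in\mathbb{R}[s]$. Then at every steady state, the value $s=S_n^1$ is a root of the nonzero univariate polynomial $P(s)=r_2(s)\,\overline{E}-r_1(s)$. Moreover, at every steady state all other concentrations are rational functions of $S_n^1$: $S_i^1=f_i(S_n^1)$ for $i=0,\dots,n-1$ (with $E=S_0^1$), $Y_i^0=f_i^Y(S_n^1)$, and $F_i=\frac{\overline{F}_i}{1+\delta_iS_i^1}$, $Y_i^1=\frac{\delta_i\overline{F}_iS_i^1}{1+\delta_iS_i^1}$, $S_i^0=\frac{\lambda_i\overline{F}_iS_i^1}{(1+\delta_iS_i^1)S_{i-1}^1}$, where all denominators occurring (in the recursive definition of $f_i,f_i^Y$ evaluated at $S_n^1$ and in these formulas) are nonzero.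
   Context: A one-site PTM cascade with $n$ layers has chemical species $E=S_0^1$ and, for $i=1,\dots,n$, $S_i^0,S_i^1,F_i,Y_i^0,Y_i^1$, with reactions $S_{i-1}^1+S_i^0 \rightleftharpoons Y_i^0 \to S_{i-1}^1+S_i^1$ (rate constants $a_i^0,b_i^0,c_i^0$) and $F_i+S_i^1\rightleftharpoons Y_i^1\to F_i+S_i^0$ (rate constants $a_i^1,b_i^1,c_i^1$), all positive, mass-action kinetics. Put $\delta_i=a_i^1/(b_i^1+c_i^1)$, $\gamma_i=(c_i^1/c_i^0)\delta_i$, $\lambda_i=\frac{b_i^0+c_i^0}{a_i^0}\gamma_i$. Given total amounts $\overline{E},\overline{F}_i,\overline{S}_i$, a steady state is a real solution of: $Y_i^0=\gamma_iF_iS_i^1$, $Y_i^1=\delta_iF_iS_i^1$, $\lambda_iF_iS_i^1=S_i^0S_{i-1}^1$, $\overline{F}_i=F_i+Y_i^1$, $\overline{S}_i=S_i^0+S_i^1+Y_i^0+Y_i^1+Y_{i+1}^0$ ($i=1,\dots,n$, $Y_{n+1}^0:=0$), $\overline{E}=E+Y_1^0$. Define for $i=1,\dots,n$ the polynomial $d_i(x,y)=(\overline{S}_i-y)-x-\overline{F}_i(\delta_i+\gamma_i)x+\delta_i(\overline{S}_i-y)x-\delta_ix^2$ and $g_i^Y(x)=\frac{\gamma_i\overline{F}_ix}{1+\delta_ix}$. Define rational functions of one variable $s$ recursively: $f_n(s)=s$, $f_{n+1}^Y(s)=0$, and for $i=n,n-1,\dots,1$: $f_i^Y(s)=g_i^Y(f_i(s))$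 and $f_{i-1}(s)=\frac{\lambda_i\overline{F}_if_i(s)}{d_i(f_i(s),f_{i+1}^Y(s))}$. *)

theory Defs
  imports "HOL-Computational_Algebra.Polynomial" "HOL-Computational_Algebra.Fraction_Field"
begin

definition ptm_delta :: "(nat \<Rightarrow> real) \<Rightarrow> (nat \<Rightarrow> real) \<Rightarrow> (nat \<Rightarrow> real) \<Rightarrow> nat \<Rightarrow> real" where
  "ptm_delta a1 b1 c1 i = a1 i / (b1 i + c1 i)"

definition ptm_gamma :: "(nat \<Rightarrow> real) \<Rightarrow> (nat \<Rightarrow> real) \<Rightarrow> (nat \<Rightarrow> real) \<Rightarrow> (nat \<Rightarrow> real) \<Rightarrow> nat \<Rightarrow> real" where
  "ptm_gamma c0 a1 b1 c1 i = (c1 i / c0 i) * ptm_delta a1 b1 c1 i"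

definition ptm_lambda :: "(nat \<Rightarrow> real) \<Rightarrow> (nat \<Rightarrow> real) \<Rightarrow> (nat \<Rightarrow> real) \<Rightarrow> (nat \<Rightarrow> real) \<Rightarrow> (nat \<Rightarrow> real) \<Rightarrow> (nat \<Rightarrow> real) \<Rightarrow> nat \<Rightarrow> real" where
  "ptm_lambda a0 b0 c0 a1 b1 c1 i = ((b0 i + c0 i) / a0 i) * ptm_gamma c0 a1 b1 c1 i"

(* The functions g_i^Y and d_i, over an arbitrary field 'a into which the real
   constants are embedded via c (c = identity for evaluation at a real number,
   c = constant polynomial for the field of rational functions R(s)). *)
definition ptm_gY :: "(real \<Rightarrow> 'a::field) \<Rightarrow> (nat \<Rightarrow> real) \<Rightarrow> (nat \<Rightarrow> real) \<Rightarrow> (nat \<Rightarrow> real) \<Rightarrow> nat \<Rightarrow> 'a \<Rightarrow> 'a" where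
  "ptm_gY c \<delta> \<gamma> Fb i x = c (\<gamma> i) * c (Fb i) * x / (1 + c (\<delta> i) * x)"

definition ptm_d :: "(real \<Rightarrow> 'a::field) \<Rightarrow> (nat \<Rightarrow> real) \<Rightarrow> (nat \<Rightarrow> real) \<Rightarrow> (nat \<Rightarrow> real) \<Rightarrow> (nat \<Rightarrow> real) \<Rightarrow> nat \<Rightarrow> 'a \<Rightarrow> 'a \<Rightarrow> 'a" where
  "ptm_d c \<delta> \<gamma> Fb Sb i x y =
     (c (Sb i) - y) - x - c (Fb i) * (c (\<delta> i) + c (\<gamma> i)) * x
     + c (\<delta> i) * (c (Sb i) - y) * x - c (\<delta> i) * x ^ 2"

(* ptm_h ... n s k = f_{n-k}(s), computed by the downward recursion
   f_n = s,  f_{i-1} = lambda_i Fb_i f_i / d_i(f_i, f_{i+1}^Y),  f_{n+1}^Y = 0. *)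
fun ptm_h :: "(real \<Rightarrow> 'a::field) \<Rightarrow> (nat \<Rightarrow> real) \<Rightarrow> (nat \<Rightarrow> real) \<Rightarrow> (nat \<Rightarrow> real) \<Rightarrow> (nat \<Rightarrow> real) \<Rightarrow> (nat \<Rightarrow> real)
              \<Rightarrow> nat \<Rightarrow> 'a \<Rightarrow> nat \<Rightarrow> 'a" where
  "ptm_h c \<delta> \<gamma> lam Fb Sb n s 0 = s"
| "ptm_h c \<delta> \<gamma> lam Fb Sb n s (Suc 0) =
     c (lam n) * c (Fb n) * s / ptm_d c \<delta> \<gamma> Fb Sb n s 0"
| "ptm_h c \<delta> \<gamma> lam Fb Sb n s (Suc (Suc k)) =
     (let i = n - Suc k; x = ptm_h c \<delta> \<gamma> lam Fb Sb n s (Suc k);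
          y = ptm_gY c \<delta> \<gamma> Fb (n - k) (ptm_h c \<delta> \<gamma> lam Fb Sb n s k)
      in c (lam i) * c (Fb i) * x / ptm_d c \<delta> \<gamma> Fb Sb i x y)"

definition ptm_f :: "(real \<Rightarrow> 'a::field) \<Rightarrow> (nat \<Rightarrow> real) \<Rightarrow> (nat \<Rightarrow> real) \<Rightarrow> (nat \<Rightarrow> real) \<Rightarrow> (nat \<Rightarrow> real) \<Rightarrow> (nat \<Rightarrow> real)
              \<Rightarrow> nat \<Rightarrow> 'a \<Rightarrow> nat \<Rightarrow> 'a" where
  "ptm_f c \<delta> \<gamma> lam Fb Sb n s i = ptm_h c \<delta> \<gamma> lam Fb Sb n s (n - i)"

definition ptm_fY :: "(real \<Rightarrow> 'a::field) \<Rightarrow> (nat \<Rightarrow> real) \<Rightarrow> (nat \<Rightarrow> real) \<Rightarrow> (nat \<Rightarrow> real) \<Rightarrow> (nat \<Rightarrow> real) \<Rightarrow> (nat \<Rightarrow> real)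
              \<Rightarrow> nat \<Rightarrow> 'a \<Rightarrow> nat \<Rightarrow> 'a" where
  "ptm_fY c \<delta> \<gamma> lam Fb Sb n s i =
     (if n < i then 0 else ptm_gY c \<delta> \<gamma> Fb i (ptm_f c \<delta> \<gamma> lam Fb Sb n s i))"

type_synonym ratfun = "real poly fract"

definition rconst :: "real \<Rightarrow> ratfun" where
  "rconst a = Fract [:a:] 1"

definition rvar :: ratfun where
  "rvar = Fract [:0, 1:] 1"

(* steady-state equations; E = S1 0, Y_{n+1}^0 := 0 *)
definition ptm_steady_state ::
  "nat \<Rightarrow> (nat \<Rightarrow> real) \<Rightarrow> (nat \<Rightarrow> real) \<Rightarrow> (nat \<Rightarrow> real) \<Rightarrow> (nat \<Rightarrow> real) \<Rightarrow> (nat \<Rightarrow> real) \<Rightarrow> real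
   \<Rightarrow> (nat \<Rightarrow> real) \<Rightarrow> (nat \<Rightarrow> real) \<Rightarrow> (nat \<Rightarrow> real) \<Rightarrow> (nat \<Rightarrow> real) \<Rightarrow> (nat \<Rightarrow> real) \<Rightarrow> bool" where
  "ptm_steady_state n \<delta> \<gamma> lam Fb Sb Eb S0 S1 F Y0 Y1 \<longleftrightarrow>
     (\<forall>i\<in>{1..n}.
        Y0 i = \<gamma> i * F i * S1 i \<and>
        Y1 i = \<delta> i * F i * S1 i \<and>
        lam i * F i * S1 i = S0 i * S1 (i - 1) \<and>
        Fb i = F i + Y1 i \<and>
        Sb i = S0 i + S1 i + Y0 i + Y1 i + (if i = n then 0 else Y0 (i + 1))) \<and>
     Eb = S1 0 + Y0 1"

end

theory Submission
  imports Defs "HOL-Computational_Algebra.Field_as_Ring" "HOL-Computational_Algebra.Polynomial_Factorial"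
begin

(* A rational function R has the value v at a point s if R = p/q for
       polynomials with q(s) \<noteq> 0 and v = p(s)/q(s).  This relation is compatible with the
       field operations, so r evaluated symbolically in R(s) and then at s agrees with the
       recursion for f_i, f_i^Y carried out numerically at s, provided every denominator
       of that recursion is nonzero at s.  For a reduced fraction r1/r2 the value forces
       r2(s) \<noteq> 0 and v = r1(s)/r2(s).
   (2) P is nonzero: at s = 0 all f_i vanish and the denominators d_i(0,0) = Sb_i are
       nonzero, so r1(0) = 0, r2(0) \<noteq> 0 and P(0) = Eb r2(0) \<noteq> 0.
   (3) Steady states: all S_i^1 are nonzero, and layer i of the steady-state equations
       gives d_i(S_i^1, Y_{i+1}^0) = (1 + \<delta>_i S_i^1) S_i^0, hence the recursion
       S_{i-1}^1 = \<lambda>_i Fb_i S_i^1 / d_i(S_i^1, Y_{i+1}^0).  By downward induction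
       S_i^1 = f_i(S_n^1) and Y_i^0 = f_i^Y(S_n^1), so r(S_n^1) = S_0^1 + Y_1^0 = Eb,
       and (1) turns this into P(S_n^1) = 0. *)

section \<open>Rational functions and their values\<close>

definition has_value_at :: "'a::field poly fract \<Rightarrow> 'a \<Rightarrow> 'a \<Rightarrow> bool" where
  "has_value_at R s v \<longleftrightarrow> (\<exists>p q. R = Fract p q \<and> poly q s \<noteq> 0 \<and> v = poly p s / poly q s)"

lemma has_value_atI:
  "R = Fract p q \<Longrightarrow> poly q s \<noteq> 0 \<Longrightarrow> v = poly p s / poly q s \<Longrightarrow> has_value_at R s v"
  unfolding has_value_at_def by blast

lemma has_value_at_poly: "has_value_at (Fract p 1) s (poly p s)"
  by (rule has_value_atI[of _ p 1]) simp_all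

lemma has_value_at_rconst: "has_value_at (rconst a) s a"
  using has_value_at_poly[of "[:a:]" s] by (simp add: rconst_def)

lemma has_value_at_rvar: "has_value_at rvar s s"
  using has_value_at_poly[of "[:0, 1:]" s] by (simp add: rvar_def)

lemma has_value_at_zero: "has_value_at 0 s 0"
  using has_value_at_poly[of 0 s] by (simp add: Zero_fract_def)

lemma has_value_at_one: "has_value_at 1 s 1"
  using has_value_at_poly[of 1 s] by (simp add: One_fract_def)

lemma has_value_at_add:
  assumes "has_value_at A s a" "has_value_at B s b"
  shows "has_value_at (A + B) s (a + b)"
proof -
  obtain p q p' q' where A: "A = Fract p q" "poly q s \<noteq> 0" "a = poly p s / poly q s"
    and B: "B = Fract p' q'" "poly q' s \<noteq> 0" "b = poly p' s / poly q' s"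
    using assms unfolding has_value_at_def by blast
  have "q \<noteq> 0" "q' \<noteq> 0" using A B by auto
  then show ?thesis
    using A B by (intro has_value_atI[of _ "p * q' + p' * q" "q * q'"]) (simp_all add: add_frac_eq)
qed

lemma has_value_at_uminus:
  assumes "has_value_at A s a"
  shows "has_value_at (- A) s (- a)"
proof -
  obtain p q where A: "A = Fract p q" "poly q s \<noteq> 0" "a = poly p s / poly q s"
    using assms unfolding has_value_at_def by blast
  then show ?thesis by (intro has_value_atI[of _ "- p" q]) simp_all
qed

lemma has_value_at_diff:
  "has_value_at A s a \<Longrightarrow> has_value_at B s b \<Longrightarrow> has_value_at (A - B) s (a - b)"
  using has_value_at_add[of A s a "- B" "- b"] has_value_at_uminus[of B s b] by simp

lemma has_value_at_mult:
  assumes "has_value_at A s a" "has_value_at B s b"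
  shows "has_value_at (A * B) s (a * b)"
proof -
  obtain p q p' q' where A: "A = Fract p q" "poly q s \<noteq> 0" "a = poly p s / poly q s"
    and B: "B = Fract p' q'" "poly q' s \<noteq> 0" "b = poly p' s / poly q' s"
    using assms unfolding has_value_at_def by blast
  then show ?thesis by (intro has_value_atI[of _ "p * p'" "q * q'"]) simp_all
qed

lemma has_value_at_divide:
  assumes "has_value_at A s a" "has_value_at B s b" and b: "b \<noteq> 0"
  shows "has_value_at (A / B) s (a / b)"
proof -
  obtain p q p' q' where A: "A = Fract p q" "poly q s \<noteq> 0" "a = poly p s / poly q s"
    and B: "B = Fract p' q'" "poly q' s \<noteq> 0" "b = poly p' s / poly q' s"
    using assms unfolding has_value_at_def by blast
  have "poly p' s \<noteq> 0" using B b by auto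
  then show ?thesis using A B by (intro has_value_atI[of _ "p * q'" "q * p'"]) simp_all
qed

lemma has_value_at_power2: "has_value_at A s a \<Longrightarrow> has_value_at (A ^ 2) s (a ^ 2)"
  by (simp add: power2_eq_square has_value_at_mult)

text \<open>The value of a reduced fraction p/q is read off from p and q themselves: any other
  representation p'/q' is a multiple of it, so q' (s) \<noteq> 0 forces q(s) \<noteq> 0.\<close>
lemma has_value_at_reduced:
  fixes p q :: "'a::field_gcd poly"
  assumes val: "has_value_at (Fract p q) s v" and q: "q \<noteq> 0" and cop: "coprime p q"
  shows "poly q s \<noteq> 0 \<and> v = poly p s / poly q s"
proof -
  obtain p' q' where eq: "Fract p q = Fract p' q'" and q': "poly q' s \<noteq> 0"
    and v: "v = poly p' s / poly q' s"
    using val unfolding has_value_at_def by blast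
  have "q' \<noteq> 0" using q' by auto
  then have cross: "p * q' = p' * q" using eq q by (simp add: eq_fract)
  then have "q dvd p * q'" by simp
  then have "q dvd q'" using cop coprime_dvd_mult_right_iff[of q p q'] by (simp add: coprime_commute)
  then obtain k where k: "q' = q * k" by blast
  have "p' = p * k" using cross q unfolding k by (simp add: algebra_simps)
  moreover have "poly q s \<noteq> 0" "poly k s \<noteq> 0" using q' unfolding k by auto
  ultimately show ?thesis using v k by simp
qed

section \<open>The recursion for f_i and f_i^Y\<close>

lemma ptm_f_top: "ptm_f c \<delta> \<gamma> lam Fb Sb n s n = s"
  by (simp add: ptm_f_def)

lemma ptm_fY_above: "n < i \<Longrightarrow> ptm_fY c \<delta> \<gamma> lam Fb Sb n s i = 0"
  by (simp add: ptm_fY_def)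

lemma ptm_fY_eq:
  "i \<le> n \<Longrightarrow> ptm_fY c \<delta> \<gamma> lam Fb Sb n s i = ptm_gY c \<delta> \<gamma> Fb i (ptm_f c \<delta> \<gamma> lam Fb Sb n s i)"
  by (simp add: ptm_fY_def)

text \<open>The defining recursion f_{i-1} = \<lambda>_i Fb_i f_i / d_i(f_i, f_{i+1}^Y) in terms of the
  layer index i, rather than the distance n - i used by ptm_h.\<close>
lemma ptm_f_step:
  assumes i: "i \<in> {1..n}"
  shows "ptm_f c \<delta> \<gamma> lam Fb Sb n s (i - 1) =
    c (lam i) * c (Fb i) * ptm_f c \<delta> \<gamma> lam Fb Sb n s i /
    ptm_d c \<delta> \<gamma> Fb Sb i (ptm_f c \<delta> \<gamma> lam Fb Sb n s i) (ptm_fY c \<delta> \<gamma> lam Fb Sb n s (Suc i))"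
proof (cases "i = n")
  case True
  then have "n - (i - 1) = Suc 0" using i by simp
  then show ?thesis using True by (simp add: ptm_f_def ptm_fY_def)
next
  case False
  define k where "k = n - Suc i"
  have "n - (i - 1) = Suc (Suc k)" "n - Suc k = i" "n - i = Suc k" "n - Suc i = k" "n - k = Suc i"
    using i False by (auto simp: k_def)
  then show ?thesis using False i by (simp add: ptm_f_def ptm_fY_def Let_def)
qed

lemma ptm_f_at_zero: "ptm_f (\<lambda>x. x) \<delta> \<gamma> lam Fb Sb n (0::real) i = 0"
proof -
  have "ptm_h (\<lambda>x. x) \<delta> \<gamma> lam Fb Sb n (0::real) k = 0" for k
    by (induction "\<lambda>x::real. x" \<delta> \<gamma> lam Fb Sb n "0::real" k rule: ptm_h.induct)
       (simp_all add: Let_def)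
  then show ?thesis by (simp add: ptm_f_def)
qed

lemma ptm_fY_at_zero: "ptm_fY (\<lambda>x. x) \<delta> \<gamma> lam Fb Sb n (0::real) i = 0"
  by (simp add: ptm_fY_def ptm_gY_def ptm_f_at_zero)

section \<open>Evaluating the symbolic cascade at a point\<close>

definition ptm_regular_at ::
  "(nat \<Rightarrow> real) \<Rightarrow> (nat \<Rightarrow> real) \<Rightarrow> (nat \<Rightarrow> real) \<Rightarrow> (nat \<Rightarrow> real) \<Rightarrow> (nat \<Rightarrow> real) \<Rightarrow> nat \<Rightarrow> real \<Rightarrow> bool"
where
  "ptm_regular_at \<delta> \<gamma> lam Fb Sb n s \<longleftrightarrow>
     (\<forall>i\<in>{1..n}.
        ptm_d (\<lambda>x. x) \<delta> \<gamma> Fb Sb i (ptm_f (\<lambda>x. x) \<delta> \<gamma> lam Fb Sb n s i)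
              (ptm_fY (\<lambda>x. x) \<delta> \<gamma> lam Fb Sb n s (i + 1)) \<noteq> 0 \<and>
        1 + \<delta> i * ptm_f (\<lambda>x. x) \<delta> \<gamma> lam Fb Sb n s i \<noteq> 0)"

lemma has_value_at_gY:
  "has_value_at X s x \<Longrightarrow> 1 + \<delta> i * x \<noteq> 0 \<Longrightarrow>
   has_value_at (ptm_gY rconst \<delta> \<gamma> Fb i X) s (ptm_gY (\<lambda>x. x) \<delta> \<gamma> Fb i x)"
  unfolding ptm_gY_def
  by (intro has_value_at_divide has_value_at_mult has_value_at_add has_value_at_rconst
        has_value_at_one) auto

lemma has_value_at_d:
  "has_value_at X s x \<Longrightarrow> has_value_at Y s y \<Longrightarrow>
   has_value_at (ptm_d rconst \<delta> \<gamma> Fb Sb i X Y) s (ptm_d (\<lambda>x. x) \<delta> \<gamma> Fb Sb i x y)"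
  unfolding ptm_d_def
  by (intro has_value_at_mult has_value_at_add has_value_at_diff has_value_at_power2
        has_value_at_rconst) auto

lemma has_value_at_ptm_f:
  assumes reg: "ptm_regular_at \<delta> \<gamma> lam Fb Sb n s" and "i \<le> n"
  shows "has_value_at (ptm_f rconst \<delta> \<gamma> lam Fb Sb n rvar i) s (ptm_f (\<lambda>x. x) \<delta> \<gamma> lam Fb Sb n s i) \<and>
         has_value_at (ptm_fY rconst \<delta> \<gamma> lam Fb Sb n rvar (Suc i)) s
           (ptm_fY (\<lambda>x. x) \<delta> \<gamma> lam Fb Sb n s (Suc i))"
  using \<open>i \<le> n\<close>
proof (induction i rule: inc_induct)
  case base
  then show ?case by (simp add: ptm_f_top ptm_fY_above has_value_at_rvar has_value_at_zero)
next
  case (step m)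
  let ?f = "ptm_f (\<lambda>x. x) \<delta> \<gamma> lam Fb Sb n s"
  have i: "Suc m \<in> {1..n}" using step.hyps by simp
  have d: "ptm_d (\<lambda>x. x) \<delta> \<gamma> Fb Sb (Suc m) (?f (Suc m))
             (ptm_fY (\<lambda>x. x) \<delta> \<gamma> lam Fb Sb n s (Suc (Suc m))) \<noteq> 0"
    and g: "1 + \<delta> (Suc m) * ?f (Suc m) \<noteq> 0"
    using reg i unfolding ptm_regular_at_def by auto
  have "has_value_at (ptm_f rconst \<delta> \<gamma> lam Fb Sb n rvar m) s (?f m)"
    using ptm_f_step[OF i, of rconst] ptm_f_step[OF i, of "\<lambda>x. x"] step.IH d
    by (simp add: has_value_at_divide has_value_at_mult has_value_at_rconst has_value_at_d)
  moreover have "has_value_at (ptm_fY rconst \<delta> \<gamma> lam Fb Sb n rvar (Suc m)) s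
                   (ptm_fY (\<lambda>x. x) \<delta> \<gamma> lam Fb Sb n s (Suc m))"
    using step.hyps step.IH g by (simp add: ptm_fY_eq has_value_at_gY)
  ultimately show ?case ..
qed

lemma has_value_at_cascade:
  assumes "ptm_regular_at \<delta> \<gamma> lam Fb Sb n s"
  shows "has_value_at (ptm_f rconst \<delta> \<gamma> lam Fb Sb n rvar 0 + ptm_fY rconst \<delta> \<gamma> lam Fb Sb n rvar 1) s
           (ptm_f (\<lambda>x. x) \<delta> \<gamma> lam Fb Sb n s 0 + ptm_fY (\<lambda>x. x) \<delta> \<gamma> lam Fb Sb n s 1)"
  using has_value_at_ptm_f[OF assms, of 0] by (simp add: has_value_at_add)

lemma cascade_value_at_zero:
  assumes "\<forall>i\<in>{1..n}. Sb i \<noteq> 0"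
  shows "has_value_at (ptm_f rconst \<delta> \<gamma> lam Fb Sb n rvar 0 + ptm_fY rconst \<delta> \<gamma> lam Fb Sb n rvar 1) 0 0"
proof -
  have "ptm_regular_at \<delta> \<gamma> lam Fb Sb n 0"
    using assms by (simp add: ptm_regular_at_def ptm_f_at_zero ptm_fY_at_zero ptm_d_def)
  from has_value_at_cascade[OF this] show ?thesis by (simp add: ptm_f_at_zero ptm_fY_at_zero)
qed

text \<open>Hence the polynomial P = Eb r2 - r1 of a reduced representation r = r1/r2 is nonzero:
  P(0) = Eb r2(0) \<noteq> 0.\<close>
lemma cascade_polynomial_nonzero:
  fixes r1 r2 :: "real poly"
  assumes "\<forall>i\<in>{1..n}. Sb i \<noteq> 0" and "Eb \<noteq> 0" and "r2 \<noteq> 0" "coprime r1 r2"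
    and r_eq: "ptm_f rconst \<delta> \<gamma> lam Fb Sb n rvar 0 + ptm_fY rconst \<delta> \<gamma> lam Fb Sb n rvar 1 = Fract r1 r2"
  shows "smult Eb r2 - r1 \<noteq> 0"
proof -
  have "has_value_at (Fract r1 r2) 0 0"
    using cascade_value_at_zero[OF assms(1), of \<delta> \<gamma> lam Fb] r_eq by simp
  then have "poly r2 0 \<noteq> 0 \<and> poly r1 0 = 0" using has_value_at_reduced assms(3,4) by fastforce
  then have "poly (smult Eb r2 - r1) 0 \<noteq> 0" using \<open>Eb \<noteq> 0\<close> by simp
  then show ?thesis by auto
qed

section \<open>Steady states\<close>

text \<open>Pure algebra of one layer: eliminating F, Y^0, Y^1 from the layer equations turns
  d(x, y) into (1 + \<delta> x) S^0, which yields the backward recursion for S^1_{i-1}.\<close>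
lemma layer_recursion_algebra:
  fixes Ya Yb F x Sz e Fb Sb y dl gm lm :: real
  assumes "Ya = gm * F * x" "Yb = dl * F * x" "lm * F * x = Sz * e" "Fb = F + Yb"
    "Sb = Sz + x + Ya + Yb + y" and nonzero: "e \<noteq> 0" "lm \<noteq> 0" "Fb \<noteq> 0" "x \<noteq> 0"
  defines "D \<equiv> (Sb - y) - x - Fb * (dl + gm) * x + dl * (Sb - y) * x - dl * x ^ 2"
  shows "D \<noteq> 0 \<and> lm * Fb * x / D = e"
proof -
  have "D = (1 + dl * x) * Sz" unfolding D_def using assms(1-5)
    by (simp add: power2_eq_square algebra_simps)
  then have "D * e = (1 + dl * x) * (lm * F * x)" using assms(3) by simp
  also have "\<dots> = lm * Fb * x" using assms(2,4) by (simp add: algebra_simps)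
  finally have De: "D * e = lm * Fb * x" .
  moreover have "lm * Fb * x \<noteq> 0" using nonzero by simp
  ultimately have "D \<noteq> 0" by auto
  with De nonzero(1) show ?thesis by (simp add: field_simps)
qed

text \<open>A steady state of an n-layer cascade whose parameters \<lambda>_i, Fb_i, Sb_i and Eb are
  nonzero.\<close>
locale ptm_steady =
  fixes n :: nat and \<delta> \<gamma> lam Fb Sb :: "nat \<Rightarrow> real" and Eb :: real
    and S0 S1 F Y0 Y1 :: "nat \<Rightarrow> real"
  assumes n_pos: "1 \<le> n"
    and params_nonzero: "\<And>i. i \<in> {1..n} \<Longrightarrow> lam i \<noteq> 0 \<and> Fb i \<noteq> 0 \<and> Sb i \<noteq> 0"
    and Eb_nonzero: "Eb \<noteq> 0"
    and steady: "ptm_steady_state n \<delta> \<gamma> lam Fb Sb Eb S0 S1 F Y0 Y1"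
begin

definition Y0_next :: "nat \<Rightarrow> real" where
  "Y0_next i = (if i = n then 0 else Y0 (i + 1))"

lemma layer:
  assumes "i \<in> {1..n}"
  shows "Y0 i = \<gamma> i * F i * S1 i" "Y1 i = \<delta> i * F i * S1 i"
    "lam i * F i * S1 i = S0 i * S1 (i - 1)" "Fb i = F i + Y1 i"
    "Sb i = S0 i + S1 i + Y0 i + Y1 i + Y0_next i"
  using steady assms unfolding ptm_steady_state_def Y0_next_def by auto

lemma Eb_eq: "Eb = S1 0 + Y0 1"
  using steady unfolding ptm_steady_state_def by blast

text \<open>Conservation of F_i: Fb_i = (1 + \<delta>_i S^1_i) F_i.\<close>
lemma F_eq:
  assumes i: "i \<in> {1..n}"
  shows "1 + \<delta> i * S1 i \<noteq> 0" "F i \<noteq> 0" "F i = Fb i / (1 + \<delta> i * S1 i)"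
proof -
  have "Fb i = F i * (1 + \<delta> i * S1 i)" using layer[OF i] by (simp add: algebra_simps)
  moreover have "Fb i \<noteq> 0" using params_nonzero[OF i] by simp
  ultimately show "1 + \<delta> i * S1 i \<noteq> 0" "F i \<noteq> 0" "F i = Fb i / (1 + \<delta> i * S1 i)" by auto
qed

text \<open>A vanishing S^1 propagates one layer up (through \<lambda>_i F_i S^1_i = S^0_i S^1_{i-1}) and,
  together with its upper neighbour, one layer down (then Sb_i = S^0_i \<noteq> 0).\<close>
lemma S1_zero_up: "i \<in> {1..n} \<Longrightarrow> S1 (i - 1) = 0 \<Longrightarrow> S1 i = 0"
  using layer(3)[of i] F_eq(2)[of i] params_nonzero[of i] by simp

lemma S1_zero_down:
  assumes i: "i \<in> {1..n}" and "S1 i = 0" and "i = n \<or> S1 (Suc i) = 0"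
  shows "S1 (i - 1) = 0"
proof -
  have "Y0_next i = 0"
    using assms layer(1)[of "Suc i"] by (auto simp: Y0_next_def)
  then have "S0 i \<noteq> 0" using layer(1,2,5)[OF i] params_nonzero[OF i] \<open>S1 i = 0\<close> by simp
  moreover have "S0 i * S1 (i - 1) = 0" using layer(3)[OF i] \<open>S1 i = 0\<close> by simp
  ultimately show ?thesis by simp
qed

text \<open>No S^1_j vanishes: otherwise the zero spreads down to layers 0 and 1, forcing
  Eb = S^1_0 + \<gamma>_1 F_1 S^1_1 = 0.\<close>
lemma S1_nonzero:
  assumes "j \<le> n"
  shows "S1 j \<noteq> 0"
proof
  assume "S1 j = 0"
  let ?Z = "\<lambda>i. S1 i = 0 \<and> (i = n \<or> S1 (Suc i) = 0)"
  have "?Z j"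
  proof (cases "j = n")
    case False
    then have "Suc j \<in> {1..n}" using assms by simp
    then show ?thesis using \<open>S1 j = 0\<close> S1_zero_up[of "Suc j"] by simp
  qed (use \<open>S1 j = 0\<close> in auto)
  then have "?Z 0" using assms
  proof (induction j)
    case (Suc j)
    then have "S1 j = 0" using S1_zero_down[of "Suc j"] by auto
    with Suc show ?case by simp
  qed
  then have "S1 0 = 0" "S1 1 = 0" using n_pos by auto
  then have "Eb = 0" using Eb_eq layer(1)[of 1] n_pos by simp
  with Eb_nonzero show False ..
qed

lemma layer_recursion:
  assumes i: "i \<in> {1..n}"
  shows "ptm_d (\<lambda>x. x) \<delta> \<gamma> Fb Sb i (S1 i) (Y0_next i) \<noteq> 0 \<and>
    lam i * Fb i * S1 i / ptm_d (\<lambda>x. x) \<delta> \<gamma> Fb Sb i (S1 i) (Y0_next i) = S1 (i - 1)"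
proof -
  have "S1 i \<noteq> 0" "S1 (i - 1) \<noteq> 0" using i S1_nonzero by auto
  then show ?thesis unfolding ptm_d_def
    by (intro layer_recursion_algebra[OF layer[OF i]]) (use params_nonzero[OF i] in auto)
qed

lemma Y0_eq_gY: "i \<in> {1..n} \<Longrightarrow> Y0 i = ptm_gY (\<lambda>x. x) \<delta> \<gamma> Fb i (S1 i)"
  using layer(1)[of i] F_eq(3)[of i] by (simp add: ptm_gY_def)

abbreviation f :: "nat \<Rightarrow> real" where
  "f \<equiv> ptm_f (\<lambda>x. x) \<delta> \<gamma> lam Fb Sb n (S1 n)"

abbreviation fY :: "nat \<Rightarrow> real" where
  "fY \<equiv> ptm_fY (\<lambda>x. x) \<delta> \<gamma> lam Fb Sb n (S1 n)"

lemma S1_eq_f: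
  assumes "i \<le> n"
  shows "f i = S1 i \<and> fY (Suc i) = Y0_next i"
  using assms
proof (induction i rule: inc_induct)
  case base
  then show ?case by (simp add: ptm_f_top ptm_fY_above Y0_next_def)
next
  case (step m)
  have i: "Suc m \<in> {1..n}" using step.hyps by simp
  have "f m = lam (Suc m) * Fb (Suc m) * f (Suc m) /
      ptm_d (\<lambda>x. x) \<delta> \<gamma> Fb Sb (Suc m) (f (Suc m)) (fY (Suc (Suc m)))"
    using ptm_f_step[OF i, of "\<lambda>x. x"] by simp
  also have "\<dots> = S1 m" using step.IH layer_recursion[OF i] by simp
  finally have "f m = S1 m" .
  moreover have "fY (Suc m) = Y0_next m"
    using step.hyps step.IH Y0_eq_gY[OF i] by (simp add: ptm_fY_eq Y0_next_def)
  ultimately show ?case by simp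
qed

lemma fY_eq_Y0: "i \<in> {1..n} \<Longrightarrow> fY i = Y0 i"
  using S1_eq_f[of i] Y0_eq_gY[of i] by (simp add: ptm_fY_eq)

lemma regular_at_S1: "ptm_regular_at \<delta> \<gamma> lam Fb Sb n (S1 n)"
  unfolding ptm_regular_at_def
  using S1_eq_f layer_recursion F_eq(1) by simp

lemma cascade_value_at_S1:
  "has_value_at (ptm_f rconst \<delta> \<gamma> lam Fb Sb n rvar 0 + ptm_fY rconst \<delta> \<gamma> lam Fb Sb n rvar 1)
     (S1 n) Eb"
proof -
  have "f 0 + fY 1 = Eb" using S1_eq_f[of 0] n_pos Eb_eq by (simp add: Y0_next_def)
  then show ?thesis using has_value_at_cascade[OF regular_at_S1] by simp
qed

lemma cascade_polynomial_root:
  fixes r1 r2 :: "real poly"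
  assumes "r2 \<noteq> 0" "coprime r1 r2"
    and r_eq: "ptm_f rconst \<delta> \<gamma> lam Fb Sb n rvar 0 + ptm_fY rconst \<delta> \<gamma> lam Fb Sb n rvar 1 = Fract r1 r2"
  shows "poly (smult Eb r2 - r1) (S1 n) = 0"
proof -
  have "has_value_at (Fract r1 r2) (S1 n) Eb" using cascade_value_at_S1 r_eq by simp
  then have "poly r2 (S1 n) \<noteq> 0 \<and> Eb = poly r1 (S1 n) / poly r2 (S1 n)"
    using has_value_at_reduced assms(1,2) by blast
  then show ?thesis by simp
qed

lemma closed_forms:
  assumes i: "i \<in> {1..n}"
  shows "Y1 i = \<delta> i * Fb i * S1 i / (1 + \<delta> i * S1 i)"
    "S0 i = lam i * Fb i * S1 i / ((1 + \<delta> i * S1 i) * S1 (i - 1))"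
proof -
  show "Y1 i = \<delta> i * Fb i * S1 i / (1 + \<delta> i * S1 i)" using layer(2)[OF i] F_eq(3)[OF i] by simp
  have "S1 (i - 1) \<noteq> 0" using i by (intro S1_nonzero) auto
  then have "S0 i = lam i * F i * S1 i / S1 (i - 1)"
    using layer(3)[OF i] by (simp add: field_simps)
  then show "S0 i = lam i * Fb i * S1 i / ((1 + \<delta> i * S1 i) * S1 (i - 1))"
    using F_eq(3)[OF i] by simp
qed

end

theorem mainTheorem2:
  fixes n :: nat
    and a0 b0 c0 a1 b1 c1 Fb Sb :: "nat \<Rightarrow> real"
    and Eb :: real
    and r1 r2 :: "real poly"
  defines "\<delta> \<equiv> ptm_delta a1 b1 c1"
      and "\<gamma> \<equiv> ptm_gamma c0 a1 b1 c1"
      and "lam \<equiv> ptm_lambda a0 b0 c0 a1 b1 c1"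
  assumes n: "n \<ge> 1"
    and rates: "\<forall>i\<in>{1..n}. a0 i > 0 \<and> b0 i > 0 \<and> c0 i > 0 \<and> a1 i > 0 \<and> b1 i > 0 \<and> c1 i > 0"
    and totals: "Eb > 0" "\<forall>i\<in>{1..n}. Fb i > 0 \<and> Sb i > 0"
    and reduced: "r2 \<noteq> 0" "coprime r1 r2"
    and r_eq: "ptm_f rconst \<delta> \<gamma> lam Fb Sb n rvar 0 + ptm_fY rconst \<delta> \<gamma> lam Fb Sb n rvar 1 = Fract r1 r2"
  shows "smult Eb r2 - r1 \<noteq> 0 \<and>
    (\<forall>S0 S1 F Y0 Y1. ptm_steady_state n \<delta> \<gamma> lam Fb Sb Eb S0 S1 F Y0 Y1 \<longrightarrow>
       poly (smult Eb r2 - r1) (S1 n) = 0 \<and>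
       (\<forall>i\<in>{1..n}.
          ptm_d (\<lambda>x. x) \<delta> \<gamma> Fb Sb i (ptm_f (\<lambda>x. x) \<delta> \<gamma> lam Fb Sb n (S1 n) i)
                (ptm_fY (\<lambda>x. x) \<delta> \<gamma> lam Fb Sb n (S1 n) (i + 1)) \<noteq> 0 \<and>
          1 + \<delta> i * ptm_f (\<lambda>x. x) \<delta> \<gamma> lam Fb Sb n (S1 n) i \<noteq> 0) \<and>
       (\<forall>i<n. S1 i = ptm_f (\<lambda>x. x) \<delta> \<gamma> lam Fb Sb n (S1 n) i) \<and>
       (\<forall>i\<in>{1..n}.
          Y0 i = ptm_fY (\<lambda>x. x) \<delta> \<gamma> lam Fb Sb n (S1 n) i \<and>
          1 + \<delta> i * S1 i \<noteq> 0 \<and> S1 (i - 1) \<noteq> 0 \<and>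
          F i = Fb i / (1 + \<delta> i * S1 i) \<and>
          Y1 i = \<delta> i * Fb i * S1 i / (1 + \<delta> i * S1 i) \<and>
          S0 i = lam i * Fb i * S1 i / ((1 + \<delta> i * S1 i) * S1 (i - 1))))"
proof -
  \<comment> \<open>Positive rate constants give \<lambda>_i > 0; only nonvanishing of the parameters is used.\<close>
  have params: "lam i \<noteq> 0 \<and> Fb i \<noteq> 0 \<and> Sb i \<noteq> 0" if "i \<in> {1..n}" for i
  proof -
    have "lam i > 0" using rates that unfolding lam_def ptm_lambda_def ptm_gamma_def ptm_delta_def
      by (auto intro!: mult_pos_pos divide_pos_pos add_pos_pos)
    moreover have "Fb i > 0" "Sb i > 0" using totals(2) that by blast+
    ultimately show ?thesis by simp
  qed
  have P_nonzero: "smult Eb r2 - r1 \<noteq> 0"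
    by (rule cascade_polynomial_nonzero[OF _ _ reduced r_eq]) (use params totals(1) in auto)
  show ?thesis
  proof (intro conjI[OF P_nonzero] allI impI, goal_cases)
    case (1 S0 S1 F Y0 Y1)
    interpret ptm_steady n \<delta> \<gamma> lam Fb Sb Eb S0 S1 F Y0 Y1
      using n params totals(1) 1 by unfold_locales auto
    have "S1 (i - 1) \<noteq> 0" if "i \<in> {1..n}" for i using that by (intro S1_nonzero) auto
    then show ?case
      using cascade_polynomial_root[OF reduced r_eq] regular_at_S1 S1_eq_f fY_eq_Y0 F_eq closed_forms
      unfolding ptm_regular_at_def by auto
  qed
qed

end
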